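(* Let $a,b>0$ with $a\neq2b$, $\eta\in(0,1]$, $T>0$ and $0<\tau\le T$. For two independent photons each in the double-exponential state $(a,b)$, each detected by a detector of efficiency $\eta$, define the coincidence probability $$p_{\mathrm{ph\text{-}ph}}(T,\tau)=\iint_{|t_1-t_2|\le\tau}p_T(t_1)\,p_T(t_2)\,dt_1\,dt_2 .$$ Then $$p_{\mathrm{ph\text{-}ph}}(T,\tau)\left(\frac{p_{\mathrm{det}}(T)}{\eta}\right)^2=\frac{a^2}{a^2-4b^2}(1-e^{-2b\tau})-\frac{4b^2}{a^2-4b^2}(1-e^{-a\tau})+\frac{a^2}{(a-2b)^2}(1-e^{2b\tau})e^{-4bT}+\frac{4b^2}{(a-2b)^2}(1-e^{a\tau})e^{-2aT}-\frac{4ab}{(a-2b)^2}\left(1-\frac{ae^{2b\tau}+2be^{a\tau}}{a+2b}\right)e^{-(a+2b)T}.$$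
   Context: $\Theta$ is the Heaviside step function. The double-exponential photon state $(a,b)$ is the mixture over emission times $t_0$ with density $p_{\mathrm{em}}(t_0)=ae^{-at_0}\Theta(t_0)$ of pure photons with temporal wave function $\psi_{t_0}(t)=\sqrt{2b}\,e^{-b(t-t_0)}\Theta(t-t_0)$. The detection-time density is $p(t)=\eta\int_0^\infty p_{\mathrm{em}}(t_0)|\psi_{t_0}(t)|^2dt_0$, the probability of detection within the detection time window $[0,T]$ is $p_{\mathrm{det}}(T)=\int_0^Tp(t)\,dt$, and the detection-time density conditioned on detection within $[0,T]$ is $p_T(t)=\Theta(t)\Theta(T-t)p(t)/p_{\mathrm{det}}(T)$. $\tau$ is the coincidence time window. *)

theory Defs
  imports "HOL-Analysis.Analysis"
begin

text \<open>Heaviside step function (value at 0 is immaterial: only enters integrands).\<close>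
definition heaviside :: "real \<Rightarrow> real" where
  "heaviside x = (if 0 \<le> x then 1 else 0)"

definition p_em :: "real \<Rightarrow> real \<Rightarrow> real" where
  "p_em a t0 = a * exp (- a * t0) * heaviside t0"

definition psi :: "real \<Rightarrow> real \<Rightarrow> real \<Rightarrow> real" where
  "psi b t0 t = sqrt (2 * b) * exp (- b * (t - t0)) * heaviside (t - t0)"

definition p_dens :: "real \<Rightarrow> real \<Rightarrow> real \<Rightarrow> real \<Rightarrow> real" where
  "p_dens \<eta> a b t = \<eta> * integral {0..} (\<lambda>t0. p_em a t0 * \<bar>psi b t0 t\<bar>^2)"

definition p_det :: "real \<Rightarrow> real \<Rightarrow> real \<Rightarrow> real \<Rightarrow> real" where
  "p_det \<eta> a b T = integral {0..T} (p_dens \<eta> a b)"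

definition p_T :: "real \<Rightarrow> real \<Rightarrow> real \<Rightarrow> real \<Rightarrow> real \<Rightarrow> real" where
  "p_T \<eta> a b T t = heaviside t * heaviside (T - t) * p_dens \<eta> a b t / p_det \<eta> a b T"

definition p_phph :: "real \<Rightarrow> real \<Rightarrow> real \<Rightarrow> real \<Rightarrow> real \<Rightarrow> real" where
  "p_phph \<eta> a b T \<tau> =
     integral {(t1, t2). \<bar>t1 - t2\<bar> \<le> \<tau>} (\<lambda>(t1, t2). p_T \<eta> a b T t1 * p_T \<eta> a b T t2)"

end

theory Submission
  imports Defs
begin

text \<open>
  At efficiency \<eta> the detection density of the state is \<eta> f on [0, \<infinity>), where
  f t = 2ab/(2b - a) (exp (-a t) - exp (-2b t)) is the convolution of the emission density with
  the intensity |\<psi>|^2; let F be its primitive with F 0 = 0. Conditioning on [0, T] divides by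
  \<eta> F T, so the left-hand side is the integral of f x f y over the part of [0, T]^2 where
  |x - y| \<le> \<tau>. By Fubini this is the integral over [0, T] of
  f x (F (min T (x + \<tau>)) - F (max 0 (x - \<tau>))), which splits into F T (F T - F (T - \<tau>)) and
  the integrals of f x F (x + \<tau>) over [0, T - \<tau>] and of f x F (x - \<tau>) over [\<tau>, T]. These
  integrands are exponential polynomials with explicit primitives; in the resulting combination
  the terms quadratic in a single exponential cancel, which leaves the closed form.
\<close>

lemma integral_eq_antiderivative_diff:
  fixes f F :: "real \<Rightarrow> real"
  assumes "\<And>x. (F has_real_derivative f x) (at x)" and "l \<le> u"
  shows "integral {l..u} f = F u - F l"
  using assms
  by (intro integral_unique fundamental_theorem_of_calculus)
     (auto simp: has_real_derivative_iff_has_vector_derivative[symmetric] intro: DERIV_subset)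

lemma lborel_integral_indicator_Icc:
  fixes g :: "real \<Rightarrow> real"
  assumes "continuous_on {l..u} g"
  shows "(\<integral>y. indicator {l..u} y * g y \<partial>lborel) = integral {l..u} g"
proof -
  have "set_integrable lborel {l..u} g"
    unfolding set_integrable_def using assms by (rule borel_integrable_compact[OF compact_Icc])
  from set_borel_integral_eq_integral(2)[OF this] show ?thesis
    by (simp add: set_lebesgue_integral_def)
qed

lemma integral_band_product:
  fixes f g :: "real \<Rightarrow> real"
  assumes f: "continuous_on {0..T} f" and g: "continuous_on {0..T} g"
  shows "integral {(x, y). \<bar>x - y\<bar> \<le> \<tau>}
           (\<lambda>(x, y). (indicator {0..T} x * f x) * (indicator {0..T} y * g y))
       = integral {0..T} (\<lambda>x. f x * integral {max 0 (x - \<tau>)..min T (x + \<tau>)} g)"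
proof -
  define K where "K = ({0..T} \<times> {0..T}) \<inter> {z::real \<times> real. \<bar>fst z - snd z\<bar> \<le> \<tau>}"
  define F where "F = (\<lambda>z::real \<times> real. indicator K z *\<^sub>R (f (fst z) * g (snd z)))"
  define h where "h = (\<lambda>x. f x * integral {max 0 (x - \<tau>)..min T (x + \<tau>)} g)"
  have "compact K" unfolding K_def
    by (intro compact_Int_closed compact_Times compact_Icc closed_Collect_le continuous_intros)
  moreover have "continuous_on K (\<lambda>z. f (fst z) * g (snd z))"
    by (intro continuous_intros continuous_on_compose2[OF f] continuous_on_compose2[OF g])
       (auto simp: K_def)
  ultimately have "integrable lborel F"
    unfolding F_def by (rule borel_integrable_compact)
  then have F_int: "integrable (lborel \<Otimes>\<^sub>M lborel) F" by (simp add: lborel_prod)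
  have inner: "(\<integral>y. F (x, y) \<partial>lborel) = indicator {0..T} x * h x" for x
  proof (cases "x \<in> {0..T}")
    case True
    have "F (x, y) = f x * (indicator {max 0 (x - \<tau>)..min T (x + \<tau>)} y * g y)" for y
      using True by (auto simp: F_def K_def indicator_def abs_le_iff)
    moreover have "continuous_on {max 0 (x - \<tau>)..min T (x + \<tau>)} g"
      by (rule continuous_on_subset[OF g]) auto
    ultimately show ?thesis
      using True by (simp add: h_def lborel_integral_indicator_Icc)
  qed (auto simp: F_def K_def)
  have "integral {(x, y). \<bar>x - y\<bar> \<le> \<tau>}
          (\<lambda>(x, y). (indicator {0..T} x * f x) * (indicator {0..T} y * g y)) = integral UNIV F"
    by (subst integral_restrict_UNIV[symmetric])
       (auto intro!: arg_cong[where f = "integral UNIV"] simp: F_def K_def indicator_def)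
  also have "\<dots> = integral\<^sup>L (lborel \<Otimes>\<^sub>M lborel) F"
    using integral_lborel[OF \<open>integrable lborel F\<close>] by (simp add: lborel_prod)
  also have "\<dots> = (\<integral>x. indicator {0..T} x * h x \<partial>lborel)"
    using lborel_pair.integral_fst'[OF F_int] by (simp add: inner)
  also have "\<dots> = integral {0..T} h"
  proof -
    have "integrable lborel (\<lambda>x. indicator {0..T} x * h x)"
      using lborel_pair.integrable_fst'[OF F_int] by (simp add: inner)
    then show ?thesis
      using set_borel_integral_eq_integral(2)[of "{0..T}" h]
      by (simp add: set_integrable_def set_lebesgue_integral_def)
  qed
  finally show ?thesis unfolding h_def .
qed

lemma integral_band_split:
  fixes f F :: "real \<Rightarrow> real"
  assumes F: "\<And>x. (F has_real_derivative f x) (at x)" and "F 0 = 0"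
    and f: "continuous_on UNIV f" and "0 \<le> \<tau>" and "\<tau> \<le> T"
  shows "integral {0..T} (\<lambda>x. f x * integral {max 0 (x - \<tau>)..min T (x + \<tau>)} f)
       = integral {0..T - \<tau>} (\<lambda>x. f x * F (x + \<tau>)) + F T * (F T - F (T - \<tau>))
         - integral {\<tau>..T} (\<lambda>x. f x * F (x - \<tau>))"
proof -
  define \<phi> where "\<phi> = (\<lambda>x. f x * F (min T (x + \<tau>)))"
  define \<psi> where "\<psi> = (\<lambda>x. f x * F (max 0 (x - \<tau>)))"
  have "continuous_on UNIV F"
    using F by (meson DERIV_isCont continuous_at_imp_continuous_on)
  then have "\<phi> integrable_on {0..T}" "\<psi> integrable_on {0..T}"
    unfolding \<phi>_def \<psi>_def using f
    by (auto intro!: integrable_continuous_interval continuous_intros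
        continuous_on_compose2[of UNIV F] continuous_on_subset[OF f])
  have "integral {0..T} (\<lambda>x. f x * integral {max 0 (x - \<tau>)..min T (x + \<tau>)} f)
      = integral {0..T} (\<lambda>x. \<phi> x - \<psi> x)"
    using assms(4)
    by (intro integral_cong)
       (simp add: integral_eq_antiderivative_diff[OF F] \<phi>_def \<psi>_def right_diff_distrib)
  also have "\<dots> = integral {0..T} \<phi> - integral {0..T} \<psi>"
    by (rule integral_diff) fact+
  also have "integral {0..T} \<phi> = integral {0..T - \<tau>} \<phi> + integral {T - \<tau>..T} \<phi>"
    using assms(4,5) \<open>\<phi> integrable_on {0..T}\<close>
    by (intro Henstock_Kurzweil_Integration.integral_combine[symmetric]) auto
  also have "integral {0..T - \<tau>} \<phi> = integral {0..T - \<tau>} (\<lambda>x. f x * F (x + \<tau>))"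
    by (intro integral_cong) (simp add: \<phi>_def)
  also have "integral {T - \<tau>..T} \<phi> = integral {T - \<tau>..T} (\<lambda>x. F T * f x)"
    by (intro integral_cong) (simp add: \<phi>_def)
  also have "\<dots> = F T * (F T - F (T - \<tau>))"
    using integral_eq_antiderivative_diff[OF F, of "T - \<tau>" T] assms(4) by simp
  also have "integral {0..T} \<psi> = integral {0..\<tau>} \<psi> + integral {\<tau>..T} \<psi>"
    using assms(4,5) \<open>\<psi> integrable_on {0..T}\<close>
    by (intro Henstock_Kurzweil_Integration.integral_combine[symmetric]) auto
  also have "integral {0..\<tau>} \<psi> = integral {0..\<tau>} (\<lambda>_. 0)"
    using \<open>F 0 = 0\<close> by (intro integral_cong) (simp add: \<psi>_def)
  also have "integral {\<tau>..T} \<psi> = integral {\<tau>..T} (\<lambda>x. f x * F (x - \<tau>))"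
    by (intro integral_cong) (simp add: \<psi>_def)
  finally show ?thesis by simp
qed

definition dexp_density :: "real \<Rightarrow> real \<Rightarrow> real \<Rightarrow> real" where
  "dexp_density a b t = 2 * a * b / (2 * b - a) * (exp (- a * t) - exp (- 2 * b * t))"

definition dexp_cdf :: "real \<Rightarrow> real \<Rightarrow> real \<Rightarrow> real" where
  "dexp_cdf a b t = 1 - 2 * b / (2 * b - a) * exp (- a * t) + a / (2 * b - a) * exp (- 2 * b * t)"

definition dexp_shifted_antideriv :: "real \<Rightarrow> real \<Rightarrow> real \<Rightarrow> real \<Rightarrow> real" where
  "dexp_shifted_antideriv a b s x = dexp_cdf a b x
     + 1 / (2 * b - a)^2 * (2 * b^2 * exp (- a * s) * exp (- a * x)^2
        - 2 * a * b / (a + 2 * b) * (2 * b * exp (- a * s) + a * exp (- 2 * b * s))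
            * (exp (- a * x) * exp (- 2 * b * x))
        + a^2 / 2 * exp (- 2 * b * s) * exp (- 2 * b * x)^2)"

lemma continuous_on_dexp_density: "continuous_on S (dexp_density a b)"
  unfolding dexp_density_def by (intro continuous_intros)

lemma dexp_cdf_0: "a \<noteq> 2 * b \<Longrightarrow> dexp_cdf a b 0 = 0"
  unfolding dexp_cdf_def by (simp add: field_simps)

lemma dexp_cdf_has_derivative: "(dexp_cdf a b has_real_derivative dexp_density a b x) (at x)"
  unfolding dexp_cdf_def dexp_density_def
  by (rule derivative_eq_intros refl)+ (simp add: algebra_simps diff_divide_distrib)

lemma dexp_shifted_antideriv_has_derivative:
  assumes "a \<noteq> 2 * b" and "a + 2 * b \<noteq> 0"
  shows "(dexp_shifted_antideriv a b s has_real_derivative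
           dexp_density a b x * dexp_cdf a b (x + s)) (at x)"
proof -
  define m k where "m = 2 * b - a" and "k = a + 2 * b"
  have "m \<noteq> 0" "k \<noteq> 0" using assms by (simp_all add: m_def k_def)
  have exps: "exp (- a * (x + s)) = exp (- a * x) * exp (- a * s)"
    "exp (- 2 * b * (x + s)) = exp (- 2 * b * x) * exp (- 2 * b * s)"
    by (simp_all add: algebra_simps flip: exp_add)
  show ?thesis
    unfolding dexp_shifted_antideriv_def
    apply (rule derivative_eq_intros refl dexp_cdf_has_derivative)+
    unfolding dexp_cdf_def dexp_density_def exps m_def[symmetric] k_def[symmetric]
    using \<open>m \<noteq> 0\<close> \<open>k \<noteq> 0\<close> apply (simp add: field_simps power2_eq_square)
    by (simp add: m_def k_def algebra_simps)
qed

lemma dexp_density_pos: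
  assumes "a > 0" and "b > 0" and "a \<noteq> 2 * b" and "t > 0"
  shows "dexp_density a b t > 0"
proof -
  have "(exp (- a * t) - exp (- 2 * b * t)) / (2 * b - a) > 0"
  proof (cases "a < 2 * b")
    case True
    then have "exp (- 2 * b * t) < exp (- a * t)" using assms(4) by simp
    then show ?thesis using True by (intro divide_pos_pos) simp_all
  next
    case False
    then have "2 * b < a" using assms(3) by simp
    then have "exp (- a * t) < exp (- 2 * b * t)" using assms(4) by simp
    then show ?thesis using \<open>2 * b < a\<close> by (intro divide_neg_neg) simp_all
  qed
  then have "0 < 2 * a * b * ((exp (- a * t) - exp (- 2 * b * t)) / (2 * b - a))"
    using assms(1,2) by (intro mult_pos_pos) simp_all
  then show ?thesis
    unfolding dexp_density_def by simp
qed

lemma dexp_cdf_pos: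
  assumes "a > 0" and "b > 0" and "a \<noteq> 2 * b" and "T > 0"
  shows "dexp_cdf a b T > 0"
proof -
  obtain z where "0 < z" "dexp_cdf a b T - dexp_cdf a b 0 = T * dexp_density a b z"
    using MVT2[of 0 T "dexp_cdf a b" "dexp_density a b"] dexp_cdf_has_derivative assms(4) by auto
  then show ?thesis
    using dexp_cdf_0 dexp_density_pos assms by simp
qed

lemma dexp_band_integral_eq:
  fixes a b T \<tau> :: real
  assumes "a \<noteq> 2 * b" and "a + 2 * b \<noteq> 0" and "0 \<le> \<tau>" and "\<tau> \<le> T"
  shows "integral {0..T} (\<lambda>x. dexp_density a b x
           * integral {max 0 (x - \<tau>)..min T (x + \<tau>)} (dexp_density a b))
       = dexp_shifted_antideriv a b \<tau> (T - \<tau>) - dexp_shifted_antideriv a b \<tau> 0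
         + dexp_cdf a b T * (dexp_cdf a b T - dexp_cdf a b (T - \<tau>))
         - (dexp_shifted_antideriv a b (- \<tau>) T - dexp_shifted_antideriv a b (- \<tau>) \<tau>)"
proof -
  have "integral {0..T - \<tau>} (\<lambda>x. dexp_density a b x * dexp_cdf a b (x + \<tau>))
      = dexp_shifted_antideriv a b \<tau> (T - \<tau>) - dexp_shifted_antideriv a b \<tau> 0"
    using assms by (intro integral_eq_antiderivative_diff dexp_shifted_antideriv_has_derivative) auto
  moreover have "integral {\<tau>..T} (\<lambda>x. dexp_density a b x * dexp_cdf a b (x + - \<tau>))
      = dexp_shifted_antideriv a b (- \<tau>) T - dexp_shifted_antideriv a b (- \<tau>) \<tau>"
    using assms by (intro integral_eq_antiderivative_diff dexp_shifted_antideriv_has_derivative) auto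
  ultimately show ?thesis
    using assms integral_band_split[OF dexp_cdf_has_derivative dexp_cdf_0 continuous_on_dexp_density]
    by simp
qed

lemma dexp_band_antideriv_expansion:
  fixes a b T \<tau> :: real
  defines "cA \<equiv> 2 * b / (2 * b - a)" and "cB \<equiv> a / (2 * b - a)"
    and "d \<equiv> (a - 2 * b) / (2 * b - a)^2 * (2 * a * b / (a + 2 * b))"
  shows "dexp_shifted_antideriv a b \<tau> (T - \<tau>) - dexp_shifted_antideriv a b \<tau> 0
      + dexp_cdf a b T * (dexp_cdf a b T - dexp_cdf a b (T - \<tau>))
      - (dexp_shifted_antideriv a b (- \<tau>) T - dexp_shifted_antideriv a b (- \<tau>) \<tau>)
    = - (cB + d) * (1 - exp (- 2 * b * \<tau>)) + (cA + d) * (1 - exp (- a * \<tau>))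
      + cB^2 * (1 - exp (2 * b * \<tau>)) * exp (- 4 * b * T)
      + cA^2 * (1 - exp (a * \<tau>)) * exp (- 2 * a * T)
      - (2 * cA * cB - (cA * cB + d) * exp (2 * b * \<tau>) - (cA * cB - d) * exp (a * \<tau>))
        * exp (- (a + 2 * b) * T)"
proof -
  \<comment> \<open>With \<open>\<mu>\<close> and \<open>\<kappa>\<close> opaque, the expansion is a ring identity in the exponentials.\<close>
  define \<mu> \<kappa> where "\<mu> = 1 / (2 * b - a)^2" and "\<kappa> = 2 * a * b / (a + 2 * b)"
  have d: "d = \<mu> * \<kappa> * (a - 2 * b)"
    by (simp add: d_def \<mu>_def \<kappa>_def)
  have F: "dexp_cdf a b x = 1 - cA * exp (- a * x) + cB * exp (- 2 * b * x)" for x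
    by (simp add: dexp_cdf_def cA_def cB_def)
  have H: "dexp_shifted_antideriv a b s x = dexp_cdf a b x
      + \<mu> * (2 * b^2 * exp (- a * s) * exp (- a * x)^2
        - \<kappa> * (2 * b * exp (- a * s) + a * exp (- 2 * b * s))
            * (exp (- a * x) * exp (- 2 * b * x))
        + a^2 / 2 * exp (- 2 * b * s) * exp (- 2 * b * x)^2)" for s x
    unfolding dexp_shifted_antideriv_def \<mu>_def \<kappa>_def ..
  define P Q U V where "P = exp (- a * T)" and "Q = exp (- 2 * b * T)"
    and "U = exp (a * \<tau>)" and "V = exp (2 * b * \<tau>)"
  have "U \<noteq> 0" "V \<noteq> 0" by (simp_all add: U_def V_def)
  have exps: "exp (- a * T) = P" "exp (- 2 * b * T) = Q"
    "exp (- a * (T - \<tau>)) = P * U" "exp (- 2 * b * (T - \<tau>)) = Q * V"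
    "exp (- a * \<tau>) = 1 / U" "exp (- 2 * b * \<tau>) = 1 / V"
    "exp (- a * (- \<tau>)) = U" "exp (- 2 * b * (- \<tau>)) = V"
    "exp (- 4 * b * T) = Q^2" "exp (- 2 * a * T) = P^2" "exp (- (a + 2 * b) * T) = P * Q"
    unfolding P_def Q_def U_def V_def
    by (simp_all add: exp_minus field_simps power2_eq_square flip: exp_add exp_diff)
  show ?thesis
    unfolding H F exps d U_def[symmetric] V_def[symmetric] using \<open>U \<noteq> 0\<close> \<open>V \<noteq> 0\<close>
    by (simp add: field_simps power2_eq_square)
qed

lemma dexp_band_closed_form:
  fixes a b T \<tau> :: real
  assumes "a \<noteq> 2 * b" and "a + 2 * b \<noteq> 0"
  shows "dexp_shifted_antideriv a b \<tau> (T - \<tau>) - dexp_shifted_antideriv a b \<tau> 0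
      + dexp_cdf a b T * (dexp_cdf a b T - dexp_cdf a b (T - \<tau>))
      - (dexp_shifted_antideriv a b (- \<tau>) T - dexp_shifted_antideriv a b (- \<tau>) \<tau>) =
      a^2 / (a^2 - 4 * b^2) * (1 - exp (- 2 * b * \<tau>))
    - 4 * b^2 / (a^2 - 4 * b^2) * (1 - exp (- a * \<tau>))
    + a^2 / (a - 2 * b)^2 * (1 - exp (2 * b * \<tau>)) * exp (- 4 * b * T)
    + 4 * b^2 / (a - 2 * b)^2 * (1 - exp (a * \<tau>)) * exp (- 2 * a * T)
    - 4 * a * b / (a - 2 * b)^2
        * (1 - (a * exp (2 * b * \<tau>) + 2 * b * exp (a * \<tau>)) / (a + 2 * b))
        * exp (- (a + 2 * b) * T)"
proof -
  define cA cB d where "cA = 2 * b / (2 * b - a)" and "cB = a / (2 * b - a)"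
    and "d = (a - 2 * b) / (2 * b - a)^2 * (2 * a * b / (a + 2 * b))"
  define m k where "m = 2 * b - a" and "k = a + 2 * b"
  have "m \<noteq> 0" "k \<noteq> 0" using assms by (simp_all add: m_def k_def)
  have mk: "a^2 - 4 * b^2 = - (m * k)" "(a - 2 * b)^2 = m^2" "a + 2 * b = k"
    by (simp_all add: m_def k_def algebra_simps power2_eq_square)
  have "a - 2 * b = - m" by (simp add: m_def)
  then have d_eq: "d = - (2 * a * b / (m * k))"
    using \<open>m \<noteq> 0\<close> by (simp add: d_def m_def[symmetric] k_def[symmetric] power2_eq_square)
  have "cB + d = - (a^2 / (a^2 - 4 * b^2))" "cA + d = - (4 * b^2 / (a^2 - 4 * b^2))"
    "cB^2 = a^2 / (a - 2 * b)^2" "cA^2 = 4 * b^2 / (a - 2 * b)^2"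
    "2 * cA * cB - (cA * cB + d) * V - (cA * cB - d) * U
       = 4 * a * b / (a - 2 * b)^2 * (1 - (a * V + 2 * b * U) / (a + 2 * b))" for U V
    unfolding mk cA_def cB_def d_eq m_def[symmetric] using \<open>m \<noteq> 0\<close> \<open>k \<noteq> 0\<close>
    by (simp_all add: field_simps power2_eq_square) (simp_all add: m_def k_def algebra_simps)
  then show ?thesis
    using dexp_band_antideriv_expansion[of a b \<tau> T, folded cA_def cB_def d_def] by simp
qed

lemma p_em_psi_sq:
  assumes "b \<ge> 0" and "t0 \<ge> 0"
  shows "p_em a t0 * \<bar>psi b t0 t\<bar>^2
       = (if t0 \<le> t then 2 * a * b * exp (- 2 * b * t) * exp ((2 * b - a) * t0) else 0)"
proof -
  have "exp (- a * t0) * exp (- b * (t - t0))^2 = exp (- 2 * b * t) * exp ((2 * b - a) * t0)"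
    by (simp add: power2_eq_square algebra_simps flip: exp_add)
  then show ?thesis
    using assms by (simp add: p_em_def psi_def heaviside_def power_mult_distrib)
qed

lemma p_dens_eq:
  assumes "b \<ge> 0" and "a \<noteq> 2 * b"
  shows "p_dens \<eta> a b t = (if 0 \<le> t then \<eta> * dexp_density a b t else 0)"
proof -
  define c where "c = 2 * a * b * exp (- 2 * b * t)"
  define m where "m = 2 * b - a"
  have "m \<noteq> 0" using assms(2) by (simp add: m_def)
  have "integral {0..} (\<lambda>t0. p_em a t0 * \<bar>psi b t0 t\<bar>^2)
      = integral {0..} (\<lambda>t0. if t0 \<in> {..t} then c * exp (m * t0) else 0)"
    using p_em_psi_sq[OF assms(1)]
    by (intro integral_cong) (auto simp: c_def m_def simp del: power2_abs)
  also have "\<dots> = integral {0..t} (\<lambda>t0. c * exp (m * t0))"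
    by (simp only: integral_restrict_Int Int_commute[of "{..t}"] atLeastAtMost_def)
  also have "\<dots> = (if 0 \<le> t then c * (exp (m * t) - 1) / m else 0)"
  proof (cases "0 \<le> t")
    case True
    have "((\<lambda>t0. c * exp (m * t0) / m) has_real_derivative c * exp (m * x)) (at x)" for x
      using \<open>m \<noteq> 0\<close> by (auto intro!: derivative_eq_intros)
    then have "integral {0..t} (\<lambda>t0. c * exp (m * t0))
        = c * exp (m * t) / m - c * exp (m * 0) / m"
      using True by (rule integral_eq_antiderivative_diff)
    then show ?thesis
      using True by (simp add: diff_divide_distrib right_diff_distrib)
  qed simp
  also have "\<dots> = (if 0 \<le> t then dexp_density a b t else 0)"
    using \<open>m \<noteq> 0\<close>
    by (simp add: c_def m_def dexp_density_def field_simps flip: exp_add)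
  finally show ?thesis by (simp add: p_dens_def)
qed

lemma p_det_eq:
  assumes "b \<ge> 0" and "a \<noteq> 2 * b" and "T \<ge> 0"
  shows "p_det \<eta> a b T = \<eta> * dexp_cdf a b T"
proof -
  have "p_det \<eta> a b T = integral {0..T} (\<lambda>t. \<eta> * dexp_density a b t)"
    unfolding p_det_def using assms(1,2) by (intro integral_cong) (simp add: p_dens_eq)
  also have "\<dots> = \<eta> * dexp_cdf a b T"
    using integral_eq_antiderivative_diff[OF dexp_cdf_has_derivative assms(3)] dexp_cdf_0[OF assms(2)]
    by simp
  finally show ?thesis .
qed

lemma p_T_eq:
  assumes "\<eta> \<noteq> 0" and "b \<ge> 0" and "a \<noteq> 2 * b" and "T \<ge> 0"
  shows "p_T \<eta> a b T t = indicator {0..T} t * dexp_density a b t / dexp_cdf a b T"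
  using assms by (simp add: p_T_def p_det_eq p_dens_eq heaviside_def indicator_def)

theorem theorem6:
  fixes a b \<eta> T \<tau> :: real
  assumes "a > 0" and "b > 0" and "a \<noteq> 2 * b"
    and "0 < \<eta>" and "\<eta> \<le> 1"
    and "T > 0" and "0 < \<tau>" and "\<tau> \<le> T"
  shows "p_phph \<eta> a b T \<tau> * (p_det \<eta> a b T / \<eta>)^2 =
      a^2 / (a^2 - 4 * b^2) * (1 - exp (- 2 * b * \<tau>))
    - 4 * b^2 / (a^2 - 4 * b^2) * (1 - exp (- a * \<tau>))
    + a^2 / (a - 2 * b)^2 * (1 - exp (2 * b * \<tau>)) * exp (- 4 * b * T)
    + 4 * b^2 / (a - 2 * b)^2 * (1 - exp (a * \<tau>)) * exp (- 2 * a * T)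
    - 4 * a * b / (a - 2 * b)^2
        * (1 - (a * exp (2 * b * \<tau>) + 2 * b * exp (a * \<tau>)) / (a + 2 * b))
        * exp (- (a + 2 * b) * T)"
proof -
  let ?f = "dexp_density a b" and ?F = "dexp_cdf a b" and ?H = "dexp_shifted_antideriv a b"
  let ?band = "{(x, y). \<bar>x - y\<bar> \<le> \<tau>} :: (real \<times> real) set"
  define g where "g = (\<lambda>(x, y). (indicator {0..T} x * ?f x) * (indicator {0..T} y * ?f y :: real))"
  have "?F T > 0" using dexp_cdf_pos assms by simp
  have "a + 2 * b \<noteq> 0" using assms(1,2) by simp
  have "(\<lambda>(x, y). p_T \<eta> a b T x * p_T \<eta> a b T y) = (\<lambda>z. g z / ?F T ^ 2)"
    using assms by (auto simp: g_def p_T_eq power2_eq_square)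
  then have "p_phph \<eta> a b T \<tau> = integral ?band g / ?F T ^ 2"
    unfolding p_phph_def by simp
  then have "p_phph \<eta> a b T \<tau> * (p_det \<eta> a b T / \<eta>)^2 = integral ?band g"
    using \<open>?F T > 0\<close> assms by (simp add: p_det_eq)
  also have "\<dots> = integral {0..T} (\<lambda>x. ?f x * integral {max 0 (x - \<tau>)..min T (x + \<tau>)} ?f)"
    unfolding g_def by (intro integral_band_product continuous_on_dexp_density)
  also have "\<dots> = ?H \<tau> (T - \<tau>) - ?H \<tau> 0 + ?F T * (?F T - ?F (T - \<tau>)) - (?H (- \<tau>) T - ?H (- \<tau>) \<tau>)"
    using assms by (intro dexp_band_integral_eq) auto
  also note dexp_band_closed_form[OF \<open>a \<noteq> 2 * b\<close> \<open>a + 2 * b \<noteq> 0\<close>]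
  finally show ?thesis .
qed

end
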